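(* Let $P_1,\dots,P_\ell$ and $P'_1,\dots,P'_\ell$ be transition matrices on the finite set $S$, all reversible with respect to $\pi$ (not necessarily irreducible). Let $a_1,\dots,a_\ell>0$ with $\sum_k a_k=1$, and set $P=\sum_{k=1}^\ell a_kP_k$ and $P'=\sum_{k=1}^\ell a_kP'_k$. If $P$ and $P'$ are irreducible, and for each $k$ the eigenvalues of $P_k-P'_k$ (equivalently, of $D(P_k-P'_k)$ with $D=\mathrm{diag}(\pi)$) are all non-negative, then $P'$ efficiency-dominates $P$.
   Context: $S$ is a finite set with $|S|=n$, identified with $\{1,\dots,n\}$, and $\pi$ is a probability distribution on $S$ with $\pi(x)>0$ for all $x$; $D=\mathrm{diag}(\pi(1),\dots,\pi(n))$. A transition matrix $P$ is reversible with respect to $\pi$ if $\pi(x)P(x,y)=\pi(y)P(y,x)$ for all $x,y$; irreducible if every state can be reached from every other with positive probability in some number of steps. For a Markov chain $X_1,X_2,\dots$ with transition matrix $P$ and $X_1\sim\pi$, $v(f,P)=\lim_{N\to\infty}\frac1N\mathrm{Var}\big(\sum_{i=1}^N f(X_i)\big)$. $P$ efficiency-dominates $Q$ if $v(f,P)\le v(f,Q)$ for all $f:S\to\mathbb R$. *)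

theory Defs
  imports "HOL-Analysis.Analysis"
begin

text \<open>The finite state space S is a finite type 'n; distributions are vectors
  real^'n, transition matrices are real^'n^'n with P$x$y the probability of x to y.\<close>

definition prob_dist :: "real^'n \<Rightarrow> bool" where
  "prob_dist \<pi> \<longleftrightarrow> (\<forall>x. \<pi> $ x > 0) \<and> (\<Sum>x\<in>UNIV. \<pi> $ x) = 1"

definition transition_matrix :: "real^'n^'n \<Rightarrow> bool" where
  "transition_matrix P \<longleftrightarrow> (\<forall>x y. P $ x $ y \<ge> 0) \<and> (\<forall>x. (\<Sum>y\<in>UNIV. P $ x $ y) = 1)"

definition reversible :: "real^'n \<Rightarrow> real^'n^'n \<Rightarrow> bool" where
  "reversible \<pi> P \<longleftrightarrow> (\<forall>x y. \<pi> $ x * P $ x $ y = \<pi> $ y * P $ y $ x)"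

fun mpow :: "real^'n^'n \<Rightarrow> nat \<Rightarrow> real^'n^'n" where
  "mpow P 0 = mat 1"
| "mpow P (Suc m) = mpow P m ** P"

definition irreducible_chain :: "real^'n^'n \<Rightarrow> bool" where
  "irreducible_chain P \<longleftrightarrow> (\<forall>x y. \<exists>m. mpow P m $ x $ y > 0)"

text \<open>Law of the path (X_1,...,X_N) of the chain started in \<pi>, paths indexed by 0..N-1.\<close>
definition path_weight :: "real^'n \<Rightarrow> real^'n^'n \<Rightarrow> nat \<Rightarrow> (nat \<Rightarrow> 'n) \<Rightarrow> real" where
  "path_weight \<pi> P N p = \<pi> $ (p 0) * (\<Prod>i<N - 1. P $ (p i) $ (p (Suc i)))"

definition paths :: "nat \<Rightarrow> (nat \<Rightarrow> 'n) set" where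
  "paths N = PiE {..<N} (\<lambda>_. UNIV)"

definition path_expect :: "real^'n \<Rightarrow> real^'n^'n \<Rightarrow> nat \<Rightarrow> ((nat \<Rightarrow> 'n) \<Rightarrow> real) \<Rightarrow> real" where
  "path_expect \<pi> P N g = (\<Sum>p\<in>paths N. path_weight \<pi> P N p * g p)"

definition sum_variance :: "real^'n \<Rightarrow> real^'n^'n \<Rightarrow> ('n \<Rightarrow> real) \<Rightarrow> nat \<Rightarrow> real" where
  "sum_variance \<pi> P f N =
     path_expect \<pi> P N (\<lambda>p. (\<Sum>i<N. f (p i))\<^sup>2) - (path_expect \<pi> P N (\<lambda>p. \<Sum>i<N. f (p i)))\<^sup>2"

definition asym_var :: "real^'n \<Rightarrow> ('n \<Rightarrow> real) \<Rightarrow> real^'n^'n \<Rightarrow> real" where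
  "asym_var \<pi> f P = lim (\<lambda>N. sum_variance \<pi> P f N / real N)"

definition efficiency_dominates :: "real^'n \<Rightarrow> real^'n^'n \<Rightarrow> real^'n^'n \<Rightarrow> bool" where
  "efficiency_dominates \<pi> P Q \<longleftrightarrow> (\<forall>f. asym_var \<pi> f P \<le> asym_var \<pi> f Q)"

definition cmat :: "real^'n^'n \<Rightarrow> complex^'n^'n" where
  "cmat M = (\<chi> i j. complex_of_real (M $ i $ j))"

definition is_eigenvalue :: "real^'n^'n \<Rightarrow> complex \<Rightarrow> bool" where
  "is_eigenvalue M c \<longleftrightarrow> (\<exists>v::complex^'n. v \<noteq> 0 \<and> cmat M *v v = c *s v)"

definition eigenvalues_nonneg :: "real^'n^'n \<Rightarrow> bool" where
  "eigenvalues_nonneg M \<longleftrightarrow> (\<forall>c. is_eigenvalue M c \<longrightarrow> c \<in> \<real> \<and> Re c \<ge> 0)"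

end

theory Submission
  imports Defs
begin

text \<open>
  Centre \<open>f\<close> to \<open>h = f - \<pi>(f)\<close> and solve the Poisson equation \<open>g - P g = h\<close>, which is
  possible for irreducible reversible \<open>P\<close>. The covariances of the stationary chain at lag \<open>d\<close>
  are \<open>\<langle>h, P\<^sup>d h\<rangle>\<^sub>\<pi>\<close>, a second difference of \<open>d \<mapsto> \<langle>g, P\<^sup>d g\<rangle>\<^sub>\<pi>\<close>, so the variance of
  the \<open>N\<close>-step sum telescopes to \<open>N (2\<langle>g, h\<rangle>\<^sub>\<pi> - \<langle>h, h\<rangle>\<^sub>\<pi>) + O(1)\<close>.

  Each \<open>P\<^sub>k - P'\<^sub>k\<close> is self-adjoint for \<open>\<langle>_, _\<rangle>\<^sub>\<pi>\<close> and the minimum of its Rayleigh quotient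
  is an eigenvalue, hence nonnegative; so \<open>\<langle>w, P' w\<rangle>\<^sub>\<pi> \<le> \<langle>w, P w\<rangle>\<^sub>\<pi>\<close> for all \<open>w\<close>. If \<open>g'\<close>
  solves the Poisson equation for \<open>P'\<close> and \<open>d = g' - g\<close>, the Dirichlet form of \<open>P\<close> gives
  \<open>0 \<le> \<langle>d, (I - P) d\<rangle>\<^sub>\<pi> \<le> \<langle>g', (I - P') g'\<rangle>\<^sub>\<pi> - 2\<langle>g', h\<rangle>\<^sub>\<pi> + \<langle>g, h\<rangle>\<^sub>\<pi> = \<langle>g, h\<rangle>\<^sub>\<pi> - \<langle>g', h\<rangle>\<^sub>\<pi>\<close>,
  which is the comparison of the two asymptotic variances.
\<close>

section \<open>The inner product of \<open>L\<^sup>2(\<pi>)\<close> and matrices acting on functions\<close>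

definition pi_inner :: "real^'n \<Rightarrow> ('n \<Rightarrow> real) \<Rightarrow> ('n \<Rightarrow> real) \<Rightarrow> real" where
  "pi_inner \<pi> u v = (\<Sum>x\<in>UNIV. \<pi> $ x * u x * v x)"

definition mat_app :: "real^'n^'n \<Rightarrow> ('n \<Rightarrow> real) \<Rightarrow> ('n \<Rightarrow> real)" where
  "mat_app M u = (\<lambda>x. \<Sum>y\<in>UNIV. M $ x $ y * u y)"

lemma pi_inner_commute: "pi_inner \<pi> u v = pi_inner \<pi> v u"
  unfolding pi_inner_def by (simp add: mult_ac)

lemma pi_inner_add_left: "pi_inner \<pi> (\<lambda>x. u x + w x) v = pi_inner \<pi> u v + pi_inner \<pi> w v"
  unfolding pi_inner_def by (simp add: algebra_simps sum.distrib)

lemma pi_inner_add_right: "pi_inner \<pi> v (\<lambda>x. u x + w x) = pi_inner \<pi> v u + pi_inner \<pi> v w"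
  unfolding pi_inner_def by (simp add: algebra_simps sum.distrib)

lemma pi_inner_diff_left: "pi_inner \<pi> (\<lambda>x. u x - w x) v = pi_inner \<pi> u v - pi_inner \<pi> w v"
  unfolding pi_inner_def by (simp add: algebra_simps sum_subtractf)

lemma pi_inner_diff_right: "pi_inner \<pi> v (\<lambda>x. u x - w x) = pi_inner \<pi> v u - pi_inner \<pi> v w"
  unfolding pi_inner_def by (simp add: algebra_simps sum_subtractf)

lemma pi_inner_scale_left: "pi_inner \<pi> (\<lambda>x. c * u x) v = c * pi_inner \<pi> u v"
  unfolding pi_inner_def by (simp add: algebra_simps sum_distrib_left)

lemma pi_inner_scale_right: "pi_inner \<pi> v (\<lambda>x. c * u x) = c * pi_inner \<pi> v u"
  unfolding pi_inner_def by (simp add: algebra_simps sum_distrib_left)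

lemma pi_inner_const_left: "pi_inner \<pi> (\<lambda>_. c) v = c * pi_inner \<pi> (\<lambda>_. 1) v"
  using pi_inner_scale_left[of \<pi> c "\<lambda>_. 1" v] by simp

lemma pi_inner_one_const:
  assumes "prob_dist \<pi>"
  shows "pi_inner \<pi> (\<lambda>_. 1) (\<lambda>_. c) = c"
  using assms unfolding prob_dist_def pi_inner_def by (simp add: sum_distrib_right[symmetric])

lemma pi_inner_self_nonneg:
  assumes "\<forall>x. \<pi> $ x > 0"
  shows "0 \<le> pi_inner \<pi> u u"
  unfolding pi_inner_def using assms by (intro sum_nonneg) (simp add: mult.assoc less_imp_le)

lemma pi_inner_self_eq_0:
  assumes "\<forall>x. \<pi> $ x > 0" "pi_inner \<pi> u u = 0"
  shows "u x = 0"
proof -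
  have "\<pi> $ x * u x * u x = 0"
    using assms unfolding pi_inner_def
    by (subst (asm) sum_nonneg_eq_0_iff) (auto simp: mult.assoc less_imp_le)
  with assms(1) show ?thesis by (metis less_irrefl mult_eq_0_iff)
qed

lemma pi_inner_self_pos:
  assumes "\<forall>x. \<pi> $ x > 0" "u x \<noteq> 0"
  shows "0 < pi_inner \<pi> u u"
  using pi_inner_self_nonneg[OF assms(1), of u] pi_inner_self_eq_0[OF assms(1), of u x] assms(2)
  by linarith

lemma mat_app_add: "mat_app M (\<lambda>x. u x + w x) = (\<lambda>x. mat_app M u x + mat_app M w x)"
  unfolding mat_app_def by (simp add: algebra_simps sum.distrib)

lemma mat_app_diff: "mat_app M (\<lambda>x. u x - w x) = (\<lambda>x. mat_app M u x - mat_app M w x)"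
  unfolding mat_app_def by (simp add: algebra_simps sum_subtractf)

lemma mat_app_scale: "mat_app M (\<lambda>x. c * u x) = (\<lambda>x. c * mat_app M u x)"
  unfolding mat_app_def by (simp add: sum_distrib_left mult_ac)

lemma mat_app_const:
  assumes "transition_matrix P"
  shows "mat_app P (\<lambda>_. c) = (\<lambda>_. c)"
  using assms unfolding mat_app_def transition_matrix_def by (simp add: sum_distrib_right[symmetric])

lemma mat_app_power_diff:
  "(mat_app M ^^ k) (\<lambda>x. u x - w x) = (\<lambda>x. (mat_app M ^^ k) u x - (mat_app M ^^ k) w x)"
  by (induction k) (simp_all add: mat_app_diff)

lemma mat_app_power_add:
  "(mat_app M ^^ k) (\<lambda>x. u x + w x) = (\<lambda>x. (mat_app M ^^ k) u x + (mat_app M ^^ k) w x)"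
  by (induction k) (simp_all add: mat_app_add)

lemma mat_app_power_const:
  assumes "transition_matrix P"
  shows "(mat_app P ^^ k) (\<lambda>_. c) = (\<lambda>_. c)"
  by (induction k) (simp_all add: mat_app_const[OF assms])

lemma mat_app_power_bounded:
  assumes P: "transition_matrix P" and u: "\<And>y. \<bar>u y\<bar> \<le> B"
  shows "\<bar>(mat_app P ^^ k) u x\<bar> \<le> B"
proof (induction k arbitrary: x)
  case 0
  then show ?case using u by simp
next
  case (Suc k)
  have "\<bar>(mat_app P ^^ Suc k) u x\<bar> \<le> (\<Sum>y\<in>UNIV. \<bar>P $ x $ y * (mat_app P ^^ k) u y\<bar>)"
    unfolding funpow.simps comp_def mat_app_def by (rule sum_abs)
  also have "\<dots> \<le> (\<Sum>y\<in>UNIV. P $ x $ y * B)"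
    using P Suc unfolding transition_matrix_def by (intro sum_mono) (simp add: abs_mult mult_left_mono)
  also have "\<dots> = B"
    using P unfolding transition_matrix_def by (simp add: sum_distrib_right[symmetric])
  finally show ?case .
qed

lemma pi_inner_mat_app_diff:
  "pi_inner \<pi> w (mat_app (A - B) w) = pi_inner \<pi> w (mat_app A w) - pi_inner \<pi> w (mat_app B w)"
  unfolding pi_inner_def mat_app_def by (simp add: algebra_simps sum_subtractf)

lemma pi_inner_mat_app_combination:
  "pi_inner \<pi> w (mat_app (\<Sum>k<l. a k *\<^sub>R M k) w) = (\<Sum>k<l. a k * pi_inner \<pi> w (mat_app (M k) w))"
  unfolding pi_inner_def mat_app_def
  by (simp add: sum_distrib_left sum_distrib_right sum.swap[of _ "{..<l}"] mult_ac)

section \<open>Reversible matrices\<close>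

lemma reversible_diff: "reversible \<pi> A \<Longrightarrow> reversible \<pi> B \<Longrightarrow> reversible \<pi> (A - B)"
  unfolding reversible_def by (simp add: algebra_simps)

lemma reversible_combination:
  assumes "\<And>k. k < l \<Longrightarrow> reversible \<pi> (M k)"
  shows "reversible \<pi> (\<Sum>k<l. a k *\<^sub>R M k)"
  unfolding reversible_def
proof (intro allI)
  fix x y
  have "\<pi> $ x * (\<Sum>k<l. a k * M k $ x $ y) = (\<Sum>k<l. a k * (\<pi> $ x * M k $ x $ y))"
    by (simp add: sum_distrib_left mult_ac)
  also have "\<dots> = (\<Sum>k<l. a k * (\<pi> $ y * M k $ y $ x))"
    using assms unfolding reversible_def by simp
  also have "\<dots> = \<pi> $ y * (\<Sum>k<l. a k * M k $ y $ x)"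
    by (simp add: sum_distrib_left mult_ac)
  finally show "\<pi> $ x * (\<Sum>k<l. a k *\<^sub>R M k) $ x $ y = \<pi> $ y * (\<Sum>k<l. a k *\<^sub>R M k) $ y $ x"
    by simp
qed

lemma transition_matrix_convex_combination:
  assumes "\<And>k. k < l \<Longrightarrow> transition_matrix (M k)" "\<And>k. k < l \<Longrightarrow> a k \<ge> 0" "(\<Sum>k<l. a k) = 1"
  shows "transition_matrix (\<Sum>k<l. a k *\<^sub>R M k)"
  unfolding transition_matrix_def
proof (intro conjI allI)
  fix x y
  show "0 \<le> (\<Sum>k<l. a k *\<^sub>R M k) $ x $ y"
    using assms(1,2) unfolding transition_matrix_def by (auto intro!: sum_nonneg)
next
  fix x
  have "(\<Sum>y\<in>UNIV. \<Sum>k<l. a k * M k $ x $ y) = (\<Sum>k<l. a k * (\<Sum>y\<in>UNIV. M k $ x $ y))"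
    by (simp add: sum.swap[of _ UNIV] sum_distrib_left)
  also have "\<dots> = 1"
    using assms(1,3) unfolding transition_matrix_def by simp
  finally show "(\<Sum>y\<in>UNIV. (\<Sum>k<l. a k *\<^sub>R M k) $ x $ y) = 1"
    by simp
qed

lemma pi_inner_mat_app_reversible:
  assumes "reversible \<pi> M"
  shows "pi_inner \<pi> u (mat_app M v) = pi_inner \<pi> (mat_app M u) v"
proof -
  have "pi_inner \<pi> u (mat_app M v) = (\<Sum>x\<in>UNIV. \<Sum>y\<in>UNIV. (\<pi> $ x * M $ x $ y) * u x * v y)"
    unfolding pi_inner_def mat_app_def by (simp add: sum_distrib_left mult_ac)
  also have "\<dots> = (\<Sum>x\<in>UNIV. \<Sum>y\<in>UNIV. (\<pi> $ y * M $ y $ x) * u x * v y)"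
    using assms unfolding reversible_def by simp
  also have "\<dots> = (\<Sum>y\<in>UNIV. \<Sum>x\<in>UNIV. (\<pi> $ y * M $ y $ x) * u x * v y)"
    by (rule sum.swap)
  also have "\<dots> = pi_inner \<pi> (mat_app M u) v"
    unfolding pi_inner_def mat_app_def by (simp add: sum_distrib_left sum_distrib_right mult_ac)
  finally show ?thesis .
qed

lemma pi_inner_mat_app_power_reversible:
  assumes "reversible \<pi> M"
  shows "pi_inner \<pi> (mat_app M u) ((mat_app M ^^ k) v) = pi_inner \<pi> u ((mat_app M ^^ Suc k) v)"
  using pi_inner_mat_app_reversible[OF assms, of u "(mat_app M ^^ k) v"] by (simp add: funpow_swap1)

lemma pi_inner_one_mat_app:
  assumes "reversible \<pi> P" "transition_matrix P"
  shows "pi_inner \<pi> (\<lambda>_. 1) (mat_app P u) = pi_inner \<pi> (\<lambda>_. 1) u"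
  using pi_inner_mat_app_reversible[OF assms(1), of "\<lambda>_. 1" u] mat_app_const[OF assms(2), of 1]
  by simp

lemma pi_inner_one_mat_app_power:
  assumes "reversible \<pi> P" "transition_matrix P"
  shows "pi_inner \<pi> (\<lambda>_. 1) ((mat_app P ^^ k) u) = pi_inner \<pi> (\<lambda>_. 1) u"
  by (induction k) (simp_all add: pi_inner_one_mat_app[OF assms])

lemma dirichlet_form_eq:
  assumes "reversible \<pi> P" "transition_matrix P"
  shows "2 * (pi_inner \<pi> u u - pi_inner \<pi> u (mat_app P u))
       = (\<Sum>x\<in>UNIV. \<Sum>y\<in>UNIV. \<pi> $ x * P $ x $ y * (u x - u y)\<^sup>2)"
proof -
  have rows: "(\<Sum>y\<in>UNIV. P $ x $ y) = 1" for x
    using assms(2) unfolding transition_matrix_def by blast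
  have "(\<Sum>x\<in>UNIV. \<Sum>y\<in>UNIV. \<pi> $ x * P $ x $ y * (u x - u y)\<^sup>2)
      = (\<Sum>x\<in>UNIV. \<Sum>y\<in>UNIV. \<pi> $ x * P $ x $ y * (u x)\<^sup>2)
      + (\<Sum>x\<in>UNIV. \<Sum>y\<in>UNIV. \<pi> $ x * P $ x $ y * (u y)\<^sup>2)
      - 2 * (\<Sum>x\<in>UNIV. \<Sum>y\<in>UNIV. \<pi> $ x * P $ x $ y * u x * u y)"
    by (simp add: power2_diff algebra_simps sum.distrib sum_subtractf sum_distrib_left)
  also have "(\<Sum>x\<in>UNIV. \<Sum>y\<in>UNIV. \<pi> $ x * P $ x $ y * (u x)\<^sup>2) = pi_inner \<pi> u u"
    unfolding pi_inner_def using rows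
    by (simp add: sum_distrib_left[symmetric] sum_distrib_right[symmetric] power2_eq_square mult_ac)
  also have "(\<Sum>x\<in>UNIV. \<Sum>y\<in>UNIV. \<pi> $ x * P $ x $ y * (u y)\<^sup>2)
           = (\<Sum>y\<in>UNIV. \<Sum>x\<in>UNIV. \<pi> $ y * P $ y $ x * (u y)\<^sup>2)"
    using assms(1) unfolding reversible_def by (subst sum.swap) simp
  also have "\<dots> = pi_inner \<pi> u u"
    unfolding pi_inner_def using rows
    by (simp add: sum_distrib_left[symmetric] sum_distrib_right[symmetric] power2_eq_square mult_ac)
  also have "(\<Sum>x\<in>UNIV. \<Sum>y\<in>UNIV. \<pi> $ x * P $ x $ y * u x * u y) = pi_inner \<pi> u (mat_app P u)"
    unfolding pi_inner_def mat_app_def by (simp add: sum_distrib_left mult_ac)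
  finally show ?thesis by simp
qed

lemma dirichlet_form_nonneg:
  assumes "reversible \<pi> P" "transition_matrix P" "\<forall>x. \<pi> $ x > 0"
  shows "pi_inner \<pi> u (mat_app P u) \<le> pi_inner \<pi> u u"
proof -
  have "0 \<le> (\<Sum>x\<in>UNIV. \<Sum>y\<in>UNIV. \<pi> $ x * P $ x $ y * (u x - u y)\<^sup>2)"
    using assms(2,3) unfolding transition_matrix_def
    by (intro sum_nonneg mult_nonneg_nonneg) (auto intro: less_imp_le)
  with dirichlet_form_eq[OF assms(1,2), of u] show ?thesis by simp
qed

section \<open>Correlations along the stationary chain\<close>

lemma paths_Suc: "paths (Suc m) = (\<lambda>(y, p). p(m := y)) ` (UNIV \<times> paths m)"
  unfolding paths_def lessThan_Suc by (simp add: PiE_insert_eq)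

lemma sum_paths_Suc:
  "(\<Sum>p\<in>paths (Suc m). G p) = (\<Sum>y\<in>(UNIV::'n::finite set). \<Sum>p\<in>paths m. G (p(m := y)))"
proof -
  have "inj_on (\<lambda>(y, p). p(m := y)) (UNIV \<times> (paths m :: (nat \<Rightarrow> 'n) set))"
    unfolding paths_def using inj_combinator[of m "{..<m}" "\<lambda>_. UNIV :: 'n set"] by simp
  then have "(\<Sum>p\<in>paths (Suc m). G p) = (\<Sum>q\<in>UNIV \<times> paths m. G ((\<lambda>(y, p). p(m := y)) q))"
    unfolding paths_Suc by (rule sum.reindex[unfolded comp_def])
  then show ?thesis by (simp add: sum.cartesian_product case_prod_beta)
qed

lemma path_weight_fun_upd:
  assumes "m \<ge> 1"
  shows "path_weight \<pi> P (Suc m) (p(m := y)) = path_weight \<pi> P m p * P $ (p (m - 1)) $ y"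
proof -
  obtain m' where m: "m = Suc m'" using assms by (cases m) auto
  have "(\<Prod>i<m. P $ ((p(m := y)) i) $ ((p(m := y)) (Suc i)))
      = (\<Prod>i<m'. P $ (p i) $ (p (Suc i))) * P $ (p m') $ y"
    unfolding m by (simp add: prod.lessThan_Suc)
  then show ?thesis unfolding path_weight_def using m by simp
qed

lemma path_expect_sum:
  "path_expect \<pi> P N (\<lambda>p. \<Sum>i\<in>I. G i p) = (\<Sum>i\<in>I. path_expect \<pi> P N (G i))"
  unfolding path_expect_def by (simp add: sum_distrib_left sum.swap[of _ I])

lemma path_expect_Suc_last:
  assumes "m \<ge> 1" "\<And>p y. F (p(m := y)) = F p"
  shows "path_expect \<pi> P (Suc m) (\<lambda>p. F p * K (p m))
       = path_expect \<pi> P m (\<lambda>p. F p * mat_app P K (p (m - 1)))"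
proof -
  have "path_expect \<pi> P (Suc m) (\<lambda>p. F p * K (p m))
      = (\<Sum>p\<in>paths m. \<Sum>y\<in>UNIV. path_weight \<pi> P m p * P $ (p (m - 1)) $ y * (F p * K y))"
    unfolding path_expect_def sum_paths_Suc using assms
    by (simp add: path_weight_fun_upd sum.swap[of _ UNIV])
  also have "\<dots> = path_expect \<pi> P m (\<lambda>p. F p * mat_app P K (p (m - 1)))"
    unfolding path_expect_def mat_app_def by (simp add: sum_distrib_left mult_ac)
  finally show ?thesis .
qed

lemma path_expect_Suc:
  assumes "transition_matrix P" "m \<ge> 1" "\<And>p y. F (p(m := y)) = F p"
  shows "path_expect \<pi> P (Suc m) F = path_expect \<pi> P m F"
  using path_expect_Suc_last[OF assms(2,3), where K = "\<lambda>_. 1"] mat_app_const[OF assms(1), of 1]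
  by simp

lemma path_expect_marginal:
  assumes "reversible \<pi> P" "transition_matrix P"
  shows "path_expect \<pi> P (Suc m) (\<lambda>p. G (p m)) = pi_inner \<pi> (\<lambda>_. 1) G"
proof (induction m arbitrary: G)
  case 0
  show ?case
    unfolding path_expect_def sum_paths_Suc by (simp add: path_weight_def paths_def pi_inner_def)
next
  case (Suc m)
  have "path_expect \<pi> P (Suc (Suc m)) (\<lambda>p. 1 * G (p (Suc m)))
      = path_expect \<pi> P (Suc m) (\<lambda>p. 1 * mat_app P G (p m))"
    by (subst path_expect_Suc_last) auto
  then show ?case
    using Suc.IH[of "mat_app P G"] pi_inner_one_mat_app[OF assms] by simp
qed

lemma path_expect_correlation_last:
  assumes "reversible \<pi> P" "transition_matrix P"
  shows "path_expect \<pi> P (Suc (i + d)) (\<lambda>p. h (p i) * k (p (i + d)))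
       = pi_inner \<pi> h ((mat_app P ^^ d) k)"
proof (induction d arbitrary: k)
  case 0
  show ?case
    using path_expect_marginal[OF assms, of i "\<lambda>x. h x * k x"] unfolding pi_inner_def
    by (simp add: mult_ac)
next
  case (Suc d)
  have "path_expect \<pi> P (Suc (i + Suc d)) (\<lambda>p. h (p i) * k (p (i + Suc d)))
      = path_expect \<pi> P (Suc (i + d)) (\<lambda>p. h (p i) * mat_app P k (p (i + d)))"
    by (subst path_expect_Suc_last) auto
  then show ?case
    using Suc.IH[of "mat_app P k"] by (simp add: funpow_swap1)
qed

lemma path_expect_correlation:
  assumes "reversible \<pi> P" "transition_matrix P" "i \<le> j" "j < N"
  shows "path_expect \<pi> P N (\<lambda>p. h (p i) * k (p j)) = pi_inner \<pi> h ((mat_app P ^^ (j - i)) k)"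
  using assms(4)
proof (induction N)
  case 0
  then show ?case by simp
next
  case (Suc N)
  show ?case
  proof (cases "j = N")
    case True
    then show ?thesis
      using path_expect_correlation_last[OF assms(1,2), of i "j - i" h k] assms(3) by simp
  next
    case False
    with Suc.prems have "j < N" by simp
    with assms(3) have "path_expect \<pi> P (Suc N) (\<lambda>p. h (p i) * k (p j))
                      = path_expect \<pi> P N (\<lambda>p. h (p i) * k (p j))"
      by (intro path_expect_Suc[OF assms(2)]) auto
    then show ?thesis using Suc.IH \<open>j < N\<close> by simp
  qed
qed

section \<open>The asymptotic variance through the Poisson equation\<close>

lemma pi_inner_mat_app_power_centred:
  assumes pd: "prob_dist \<pi>" and P: "reversible \<pi> P" "transition_matrix P"
    and h: "h = (\<lambda>x. f x - pi_inner \<pi> (\<lambda>_. 1) f)"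
  shows "pi_inner \<pi> f ((mat_app P ^^ d) f) - (pi_inner \<pi> (\<lambda>_. 1) f)\<^sup>2
       = pi_inner \<pi> h ((mat_app P ^^ d) h)"
proof -
  define \<mu> where "\<mu> = pi_inner \<pi> (\<lambda>_. 1) f"
  have f: "f = (\<lambda>x. \<mu> + h x)" unfolding h \<mu>_def by simp
  have h0: "pi_inner \<pi> (\<lambda>_. 1) h = 0"
    unfolding h pi_inner_diff_right pi_inner_one_const[OF pd] by simp
  have "(mat_app P ^^ d) f = (\<lambda>x. \<mu> + (mat_app P ^^ d) h x)"
    unfolding f mat_app_power_add mat_app_power_const[OF P(2)] ..
  moreover have "pi_inner \<pi> (\<lambda>_. \<mu>) ((mat_app P ^^ d) h) = 0" "pi_inner \<pi> h (\<lambda>_. \<mu>) = 0"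
    using h0 pi_inner_one_mat_app_power[OF P, of d h]
    unfolding pi_inner_const_left[of \<pi> \<mu>] pi_inner_commute[of \<pi> h] by simp_all
  moreover have "pi_inner \<pi> (\<lambda>_. \<mu>) (\<lambda>_. \<mu>) = \<mu>\<^sup>2"
    unfolding pi_inner_const_left[of \<pi> \<mu>] pi_inner_one_const[OF pd] by (simp add: power2_eq_square)
  ultimately show ?thesis
    unfolding \<mu>_def[symmetric] f
    by (simp add: pi_inner_add_left pi_inner_add_right h0 pi_inner_one_const[OF pd])
qed

lemma sum_variance_eq_sum_covariance:
  assumes pd: "prob_dist \<pi>" and P: "reversible \<pi> P" "transition_matrix P"
    and h: "h = (\<lambda>x. f x - pi_inner \<pi> (\<lambda>_. 1) f)"
  shows "sum_variance \<pi> P f N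
       = (\<Sum>i<N. \<Sum>j<N. pi_inner \<pi> h ((mat_app P ^^ (if i \<le> j then j - i else i - j)) h))"
proof -
  define \<mu> where "\<mu> = pi_inner \<pi> (\<lambda>_. 1) f"
  have "path_expect \<pi> P N (\<lambda>p. f (p i) * f (p j))
      = pi_inner \<pi> f ((mat_app P ^^ (if i \<le> j then j - i else i - j)) f)"
    if "i < N" "j < N" for i j
    using path_expect_correlation[OF P, of i j N f f] path_expect_correlation[OF P, of j i N f f] that
    by (cases "i \<le> j") (simp_all add: mult.commute)
  moreover have "path_expect \<pi> P N (\<lambda>p. f (p i)) = \<mu>" if "i < N" for i
    using path_expect_correlation[OF P order_refl that, of "\<lambda>_. 1" f] by (simp add: \<mu>_def)
  ultimately have "sum_variance \<pi> P f N
      = (\<Sum>i<N. \<Sum>j<N. pi_inner \<pi> f ((mat_app P ^^ (if i \<le> j then j - i else i - j)) f))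
        - (real N * \<mu>)\<^sup>2"
    unfolding sum_variance_def power2_eq_square sum_product path_expect_sum by simp
  also have "\<dots> = (\<Sum>i<N. \<Sum>j<N.
      pi_inner \<pi> f ((mat_app P ^^ (if i \<le> j then j - i else i - j)) f) - \<mu>\<^sup>2)"
    by (simp add: sum_subtractf power_mult_distrib power2_eq_square)
  finally show ?thesis
    unfolding \<mu>_def pi_inner_mat_app_power_centred[OF pd P h] .
qed

lemma covariance_eq_second_difference:
  assumes "reversible \<pi> P" and h: "h = (\<lambda>x. g x - mat_app P g x)"
  shows "pi_inner \<pi> h ((mat_app P ^^ d) h)
       = pi_inner \<pi> g ((mat_app P ^^ d) g) - 2 * pi_inner \<pi> g ((mat_app P ^^ Suc d) g)
         + pi_inner \<pi> g ((mat_app P ^^ Suc (Suc d)) g)"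
proof -
  have power_h: "(mat_app P ^^ k) h = (\<lambda>x. (mat_app P ^^ k) g x - (mat_app P ^^ Suc k) g x)" for k
    unfolding h mat_app_power_diff funpow_Suc_right comp_def ..
  have "pi_inner \<pi> h ((mat_app P ^^ d) h)
      = pi_inner \<pi> g ((mat_app P ^^ d) h) - pi_inner \<pi> g ((mat_app P ^^ Suc d) h)"
    by (subst (1) h) (simp only: pi_inner_diff_left pi_inner_mat_app_power_reversible[OF assms(1)])
  then show ?thesis
    unfolding power_h pi_inner_diff_right by simp
qed

text \<open>Summing a second difference of \<open>e\<close> over all pairs of lags telescopes twice.\<close>

lemma sum_lags_second_difference:
  fixes c e :: "nat \<Rightarrow> real"
  assumes "\<And>d. c d = e d - 2 * e (Suc d) + e (Suc (Suc d))"
  shows "(\<Sum>i<N. \<Sum>j<N. c (if i \<le> j then j - i else i - j))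
       = real N * (e 0 - e 2) - 2 * (e 1 - e (Suc N))"
proof -
  have row: "(\<Sum>i<n. c (n - i)) = (e 1 - e 2) - (e (Suc n) - e (Suc (Suc n)))" for n
  proof (induction n)
    case 0
    then show ?case by (simp add: numeral_2_eq_2)
  next
    case (Suc n)
    have "(\<Sum>i<Suc n. c (Suc n - i)) = c (Suc n) + (\<Sum>i<n. c (n - i))"
      by (subst sum.lessThan_Suc_shift) simp
    then show ?case using Suc assms[of "Suc n"] by (simp add: numeral_2_eq_2)
  qed
  show ?thesis
  proof (induction N)
    case 0
    then show ?case by simp
  next
    case (Suc N)
    have "(\<Sum>i<Suc N. \<Sum>j<Suc N. c (if i \<le> j then j - i else i - j))
        = (\<Sum>i<N. \<Sum>j<N. c (if i \<le> j then j - i else i - j))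
          + (\<Sum>i<N. c (N - i)) + (\<Sum>j<N. c (N - j)) + c 0"
      by (simp add: sum.distrib)
    then show ?case using Suc row[of N] assms[of 0] by (simp add: algebra_simps numeral_2_eq_2)
  qed
qed

lemma sum_variance_eq_poisson:
  assumes pd: "prob_dist \<pi>" and P: "reversible \<pi> P" "transition_matrix P"
    and h: "h = (\<lambda>x. f x - pi_inner \<pi> (\<lambda>_. 1) f)"
    and g: "\<And>x. h x = g x - mat_app P g x"
  shows "sum_variance \<pi> P f N
       = real N * (pi_inner \<pi> g g - pi_inner \<pi> g ((mat_app P ^^ 2) g))
         - 2 * (pi_inner \<pi> g (mat_app P g) - pi_inner \<pi> g ((mat_app P ^^ Suc N) g))"
proof -
  have "h = (\<lambda>x. g x - mat_app P g x)" using g by auto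
  then show ?thesis
    unfolding sum_variance_eq_sum_covariance[OF pd P h]
    by (subst sum_lags_second_difference[where e = "\<lambda>k. pi_inner \<pi> g ((mat_app P ^^ k) g)"])
      (simp_all add: covariance_eq_second_difference[OF P(1)])
qed

lemma pi_inner_mat_app_power_bounded:
  assumes "prob_dist \<pi>" "transition_matrix P"
  shows "\<bar>pi_inner \<pi> u ((mat_app P ^^ k) v)\<bar> \<le> (\<Sum>x\<in>UNIV. \<pi> $ x * \<bar>u x\<bar>) * (\<Sum>y\<in>UNIV. \<bar>v y\<bar>)"
proof -
  have v_bounded: "\<bar>v y\<bar> \<le> (\<Sum>y\<in>UNIV. \<bar>v y\<bar>)" for y
    by (rule member_le_sum) auto
  have "\<bar>pi_inner \<pi> u ((mat_app P ^^ k) v)\<bar> \<le> (\<Sum>x\<in>UNIV. \<bar>\<pi> $ x * u x * (mat_app P ^^ k) v x\<bar>)"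
    unfolding pi_inner_def by (rule sum_abs)
  also have "\<dots> \<le> (\<Sum>x\<in>UNIV. \<pi> $ x * \<bar>u x\<bar> * (\<Sum>y\<in>UNIV. \<bar>v y\<bar>))"
    using assms(1) mat_app_power_bounded[OF assms(2) v_bounded]
    by (intro sum_mono) (auto simp: prob_dist_def abs_mult less_imp_le intro!: mult_left_mono)
  finally show ?thesis
    by (simp add: sum_distrib_right)
qed

lemma tendsto_linear_plus_bounded_over_n:
  fixes b :: "nat \<Rightarrow> real"
  assumes "\<And>N. \<bar>b N\<bar> \<le> C"
  shows "(\<lambda>N. (real N * v + b N) / real N) \<longlonglongrightarrow> v"
proof -
  have "(\<lambda>N. b N / real N) \<longlonglongrightarrow> 0"
  proof (rule Lim_null_comparison)
    show "\<forall>\<^sub>F N in sequentially. norm (b N / real N) \<le> C / real N"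
      using assms by (intro always_eventually allI) (simp add: divide_right_mono)
  qed (rule lim_const_over_n)
  then have "(\<lambda>N. v + b N / real N) \<longlonglongrightarrow> v"
    using tendsto_add[OF tendsto_const, of "\<lambda>N. b N / real N" 0 sequentially v] by simp
  moreover have "\<forall>\<^sub>F N in sequentially. v + b N / real N = (real N * v + b N) / real N"
    unfolding eventually_sequentially by (intro exI[of _ 1] allI impI) (simp add: field_simps)
  ultimately show ?thesis
    by (rule Lim_transform_eventually)
qed

lemma asym_var_eq_poisson:
  assumes pd: "prob_dist \<pi>" and P: "reversible \<pi> P" "transition_matrix P"
    and h: "h = (\<lambda>x. f x - pi_inner \<pi> (\<lambda>_. 1) f)"
    and g: "\<And>x. h x = g x - mat_app P g x"
  shows "asym_var \<pi> f P = 2 * pi_inner \<pi> g h - pi_inner \<pi> h h"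
proof -
  define C where "C = (\<Sum>x\<in>UNIV. \<pi> $ x * \<bar>g x\<bar>) * (\<Sum>y\<in>UNIV. \<bar>g y\<bar>)"
  have "\<bar>- 2 * (pi_inner \<pi> g ((mat_app P ^^ 1) g) - pi_inner \<pi> g ((mat_app P ^^ Suc N) g))\<bar> \<le> 4 * C" for N
    using pi_inner_mat_app_power_bounded[OF pd P(2), of g 1 g]
      pi_inner_mat_app_power_bounded[OF pd P(2), of g "Suc N" g]
    unfolding C_def by (simp add: abs_le_iff)
  then have "(\<lambda>N. sum_variance \<pi> P f N / real N)
      \<longlonglongrightarrow> pi_inner \<pi> g g - pi_inner \<pi> g ((mat_app P ^^ 2) g)"
    unfolding sum_variance_eq_poisson[OF pd P h g] diff_conv_add_uminus
    by (intro tendsto_linear_plus_bounded_over_n) simp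
  then have "asym_var \<pi> f P = pi_inner \<pi> g g - pi_inner \<pi> g ((mat_app P ^^ 2) g)"
    unfolding asym_var_def by (rule limI)
  also have "\<dots> = pi_inner \<pi> g g - pi_inner \<pi> (mat_app P g) (mat_app P g)"
    using pi_inner_mat_app_reversible[OF P(1), of g "mat_app P g"] by (simp add: numeral_2_eq_2)
  also have "\<dots> = 2 * pi_inner \<pi> g h - pi_inner \<pi> h h"
  proof -
    have Pg: "mat_app P g = (\<lambda>x. g x - h x)" using g by auto
    show ?thesis
      unfolding Pg pi_inner_diff_left pi_inner_diff_right pi_inner_commute[of \<pi> h g] by simp
  qed
  finally show ?thesis .
qed

section \<open>Solving the Poisson equation for an irreducible chain\<close>

lemma mpow_nonneg:
  assumes "transition_matrix P"
  shows "mpow P m $ x $ y \<ge> 0"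
proof (induction m arbitrary: y)
  case 0
  then show ?case by (simp add: mat_def)
next
  case (Suc m)
  then show ?case
    using assms unfolding transition_matrix_def by (simp add: matrix_matrix_mult_def sum_nonneg)
qed

lemma mpow_pos_imp_eq:
  assumes P: "transition_matrix P" and edges: "\<forall>x y. P $ x $ y > 0 \<longrightarrow> u x = u y"
  shows "mpow P m $ x $ y > 0 \<Longrightarrow> u x = u y"
proof (induction m arbitrary: y)
  case 0
  then show ?case by (simp add: mat_def split: if_splits)
next
  case (Suc m)
  have "0 < (\<Sum>z\<in>UNIV. mpow P m $ x $ z * P $ z $ y)"
    using Suc.prems by (simp add: matrix_matrix_mult_def)
  then obtain z where "0 < mpow P m $ x $ z * P $ z $ y"
    by (metis (no_types, lifting) not_le sum_nonpos)
  moreover have "mpow P m $ x $ z \<ge> 0" "P $ z $ y \<ge> 0"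
    using mpow_nonneg[OF P] P unfolding transition_matrix_def by auto
  ultimately have "mpow P m $ x $ z > 0" "P $ z $ y > 0"
    by (auto simp: zero_less_mult_iff)
  then have "u x = u z" "u z = u y"
    using Suc.IH edges by blast+
  then show ?case by simp
qed

lemma harmonic_imp_constant:
  assumes pos: "\<forall>x. \<pi> $ x > 0" and P: "reversible \<pi> P" "transition_matrix P" "irreducible_chain P"
    and harmonic: "mat_app P u = u"
  shows "u x = u y"
proof -
  have terms_nonneg: "0 \<le> \<pi> $ x * P $ x $ y * (u x - u y)\<^sup>2" for x y
    using pos P(2) unfolding transition_matrix_def by (simp add: less_imp_le)
  have "(\<Sum>x\<in>UNIV. \<Sum>y\<in>UNIV. \<pi> $ x * P $ x $ y * (u x - u y)\<^sup>2) = 0"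
    using dirichlet_form_eq[OF P(1,2), of u] harmonic by simp
  then have zero_terms: "\<pi> $ x * P $ x $ y * (u x - u y)\<^sup>2 = 0" for x y
    using terms_nonneg by (simp add: sum_nonneg sum_nonneg_eq_0_iff) blast
  have edges: "\<forall>x y. P $ x $ y > 0 \<longrightarrow> u x = u y"
  proof (intro allI impI)
    fix x y
    assume "P $ x $ y > 0"
    then show "u x = u y"
      using zero_terms[of x y] pos[rule_format, of x] by simp
  qed
  obtain m where "mpow P m $ x $ y > 0"
    using P(3) unfolding irreducible_chain_def by blast
  then show ?thesis by (rule mpow_pos_imp_eq[OF P(2) edges])
qed

lemma harmonic_mean_zero_imp_zero:
  assumes pd: "prob_dist \<pi>" and P: "reversible \<pi> P" "transition_matrix P" "irreducible_chain P"
    and harmonic: "mat_app P u = u" and mean0: "pi_inner \<pi> (\<lambda>_. 1) u = 0"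
  shows "u x = 0"
proof -
  have "\<forall>x. \<pi> $ x > 0" using pd unfolding prob_dist_def by simp
  then have "u = (\<lambda>_. u x)"
    using harmonic_imp_constant[OF _ P harmonic] by blast
  then have "pi_inner \<pi> (\<lambda>_. 1) u = u x"
    using pi_inner_one_const[OF pd, of "u x"] by metis
  with mean0 show ?thesis by simp
qed

text \<open>The operator \<open>u \<mapsto> u - P u + \<pi>(u)\<close> preserves the mean, so its kernel consists of
  mean-zero harmonic functions and is trivial; on a finite-dimensional space it is then onto.\<close>

lemma poisson_equation_solvable:
  fixes P :: "real^'n^'n"
  assumes pd: "prob_dist \<pi>" and P: "reversible \<pi> P" "transition_matrix P" "irreducible_chain P"
    and h0: "pi_inner \<pi> (\<lambda>_. 1) h = 0"
  obtains g where "\<And>x. h x = g x - mat_app P g x"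
proof -
  define T :: "real^'n \<Rightarrow> real^'n" where
    "T v = (\<chi> x. v $ x - mat_app P (($) v) x + pi_inner \<pi> (\<lambda>_. 1) (($) v))" for v
  have mean_T: "pi_inner \<pi> (\<lambda>_. 1) (($) (T v)) = pi_inner \<pi> (\<lambda>_. 1) (($) v)" for v
  proof -
    have "($) (T v) = (\<lambda>x. (v $ x - mat_app P (($) v) x) + pi_inner \<pi> (\<lambda>_. 1) (($) v))"
      unfolding T_def by auto
    then show ?thesis
      by (simp add: pi_inner_add_right pi_inner_diff_right pi_inner_one_mat_app[OF P(1,2)]
          pi_inner_one_const[OF pd])
  qed
  have "linear T"
    by (rule linearI) (simp_all add: T_def vec_eq_iff mat_app_def pi_inner_def algebra_simps
        sum.distrib sum_distrib_left)
  moreover have "inj T"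
    unfolding linear_injective_0[OF \<open>linear T\<close>]
  proof (intro allI impI)
    fix v :: "real^'n"
    assume Tv: "T v = 0"
    then have mean0: "pi_inner \<pi> (\<lambda>_. 1) (($) v) = 0"
      using mean_T[of v] by (simp add: pi_inner_def)
    with Tv have "mat_app P (($) v) = ($) v"
      by (auto simp: T_def vec_eq_iff)
    then show "v = 0"
      using harmonic_mean_zero_imp_zero[OF pd P _ mean0] by (simp add: vec_eq_iff)
  qed
  ultimately have "surj T" by (rule linear_inj_imp_surj)
  then obtain v where Tv: "T v = vec_lambda h" by (metis surjD)
  moreover have "($) (vec_lambda h) = h" by auto
  ultimately have "pi_inner \<pi> (\<lambda>_. 1) (($) v) = 0"
    using mean_T[of v] h0 by simp
  with Tv have "h x = v $ x - mat_app P (($) v) x" for x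
    by (auto simp: T_def vec_eq_iff)
  then show thesis by (rule that)
qed

section \<open>Nonnegative spectrum and the quadratic form\<close>

lemma nonneg_quadratic_imp_linear_coeff_zero:
  fixes a b :: real
  assumes "a \<ge> 0" and nonneg: "\<And>t. 0 \<le> 2 * t * b + t\<^sup>2 * a"
  shows "b = 0"
proof (rule ccontr)
  assume "b \<noteq> 0"
  define t where "t = - b / (a + 1)"
  have t: "t * (a + 1) = - b" unfolding t_def using assms(1) by simp
  have "0 \<le> (2 * t * b + t\<^sup>2 * a) * (a + 1)\<^sup>2"
    using nonneg[of t] by simp
  also have "\<dots> = 2 * b * (t * (a + 1)) * (a + 1) + a * (t * (a + 1))\<^sup>2"
    by (simp add: algebra_simps power2_eq_square)
  also have "\<dots> = - (b\<^sup>2 * (a + 2))"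
    unfolding t by (simp add: algebra_simps power2_eq_square)
  finally have "b\<^sup>2 * (a + 2) \<le> 0" by simp
  moreover have "b\<^sup>2 * (a + 2) > 0" using \<open>b \<noteq> 0\<close> assms(1) by simp
  ultimately show False by linarith
qed

definition rayleigh_quotient :: "real^'n \<Rightarrow> real^'n^'n \<Rightarrow> ('n \<Rightarrow> real) \<Rightarrow> real" where
  "rayleigh_quotient \<pi> M u = pi_inner \<pi> u (mat_app M u) / pi_inner \<pi> u u"

lemma rayleigh_quotient_scale:
  assumes "c \<noteq> 0"
  shows "rayleigh_quotient \<pi> M (\<lambda>x. c * u x) = rayleigh_quotient \<pi> M u"
  unfolding rayleigh_quotient_def mat_app_scale pi_inner_scale_left pi_inner_scale_right
  using assms by simp

lemma rayleigh_quotient_attains_min: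
  fixes M :: "real^'n^'n"
  assumes pos: "\<forall>x. \<pi> $ x > 0"
  obtains u\<^sub>0 where "u\<^sub>0 \<noteq> (\<lambda>_. 0)"
    and "\<And>u. u \<noteq> (\<lambda>_. 0) \<Longrightarrow> rayleigh_quotient \<pi> M u\<^sub>0 \<le> rayleigh_quotient \<pi> M u"
proof -
  define q :: "real^'n \<Rightarrow> real" where "q v = rayleigh_quotient \<pi> M (($) v)" for v
  have "pi_inner \<pi> (($) v) (($) v) \<noteq> 0" if "v \<in> sphere 0 1" for v
  proof -
    from that obtain x where "v $ x \<noteq> 0"
      by (metis mem_sphere_0 norm_zero vec_eq_iff zero_index zero_neq_one)
    then show ?thesis using pi_inner_self_pos[OF pos] by fastforce
  qed
  then have "continuous_on (sphere 0 1) q"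
    unfolding q_def rayleigh_quotient_def pi_inner_def mat_app_def by (intro continuous_intros) auto
  moreover have "sphere (0::real^'n) 1 \<noteq> {}"
    using vector_choose_size[of 1] by auto
  ultimately obtain v\<^sub>0 where v\<^sub>0: "v\<^sub>0 \<in> sphere 0 1"
    and min: "\<And>v. v \<in> sphere 0 1 \<Longrightarrow> q v\<^sub>0 \<le> q v"
    using continuous_attains_inf[OF compact_sphere] by blast
  show thesis
  proof
    show "($) v\<^sub>0 \<noteq> (\<lambda>_. 0)"
      using v\<^sub>0 by (metis mem_sphere_0 norm_zero vec_eq_iff zero_index zero_neq_one)
  next
    fix u :: "'n \<Rightarrow> real"
    assume "u \<noteq> (\<lambda>_. 0)"
    then have "vec_lambda u \<noteq> 0" by (auto simp: vec_eq_iff)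
    define s where "s = norm (vec_lambda u)"
    have "s > 0" using \<open>vec_lambda u \<noteq> 0\<close> unfolding s_def by simp
    then have "q v\<^sub>0 \<le> q ((1 / s) *\<^sub>R vec_lambda u)"
      by (intro min) (simp add: s_def)
    also have "\<dots> = rayleigh_quotient \<pi> M (\<lambda>x. (1 / s) * u x)"
      unfolding q_def by (rule arg_cong[where f = "rayleigh_quotient \<pi> M"]) auto
    also have "\<dots> = rayleigh_quotient \<pi> M u"
      using \<open>s > 0\<close> by (intro rayleigh_quotient_scale) simp
    finally show "rayleigh_quotient \<pi> M (($) v\<^sub>0) \<le> rayleigh_quotient \<pi> M u"
      unfolding q_def .
  qed
qed

lemma quadratic_form_ge_rayleigh_bound:
  assumes pos: "\<forall>x. \<pi> $ x > 0"
    and bound: "\<And>u. u \<noteq> (\<lambda>_. 0) \<Longrightarrow> \<mu> \<le> rayleigh_quotient \<pi> M u"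
  shows "\<mu> * pi_inner \<pi> z z \<le> pi_inner \<pi> z (mat_app M z)"
proof (cases "z = (\<lambda>_. 0)")
  case True
  then show ?thesis by (simp add: pi_inner_def)
next
  case False
  then obtain x where "z x \<noteq> 0" by auto
  then have "pi_inner \<pi> z z > 0" by (rule pi_inner_self_pos[OF pos])
  then show ?thesis
    using bound[OF False] unfolding rayleigh_quotient_def by (simp add: pos_le_divide_eq)
qed

text \<open>Perturbing the minimiser to \<open>u\<^sub>0 + t y\<close> gives a nonnegative quadratic in \<open>t\<close>
  vanishing at \<open>t = 0\<close>; its linear coefficient \<open>2 \<langle>y, M u\<^sub>0 - \<mu> u\<^sub>0\<rangle>\<close> must vanish for every \<open>y\<close>.\<close>

lemma rayleigh_minimiser_is_eigenvector:
  assumes pos: "\<forall>x. \<pi> $ x > 0" and M: "reversible \<pi> M"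
    and attained: "pi_inner \<pi> u\<^sub>0 (mat_app M u\<^sub>0) = \<mu> * pi_inner \<pi> u\<^sub>0 u\<^sub>0"
    and min: "\<And>z. \<mu> * pi_inner \<pi> z z \<le> pi_inner \<pi> z (mat_app M z)"
  shows "mat_app M u\<^sub>0 = (\<lambda>x. \<mu> * u\<^sub>0 x)"
proof -
  define W where "W = (\<lambda>x. mat_app M u\<^sub>0 x - \<mu> * u\<^sub>0 x)"
  have "pi_inner \<pi> y W = 0" for y
  proof (rule nonneg_quadratic_imp_linear_coeff_zero)
    define R where "R = pi_inner \<pi> y (mat_app M y) - \<mu> * pi_inner \<pi> y y"
    show "R \<ge> 0" using min[of y] unfolding R_def by simp
    fix t
    have "pi_inner \<pi> u\<^sub>0 (mat_app M y) = pi_inner \<pi> y (mat_app M u\<^sub>0)"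
      using pi_inner_mat_app_reversible[OF M, of u\<^sub>0 y] pi_inner_commute by metis
    then have "pi_inner \<pi> (\<lambda>x. u\<^sub>0 x + t * y x) (mat_app M (\<lambda>x. u\<^sub>0 x + t * y x))
        - \<mu> * pi_inner \<pi> (\<lambda>x. u\<^sub>0 x + t * y x) (\<lambda>x. u\<^sub>0 x + t * y x)
        = (pi_inner \<pi> u\<^sub>0 (mat_app M u\<^sub>0) - \<mu> * pi_inner \<pi> u\<^sub>0 u\<^sub>0) + 2 * t * pi_inner \<pi> y W + t\<^sup>2 * R"
      unfolding W_def R_def mat_app_add mat_app_scale pi_inner_add_left pi_inner_add_right
        pi_inner_scale_left pi_inner_scale_right pi_inner_diff_right
      using pi_inner_commute[of \<pi> u\<^sub>0 y] by (simp add: algebra_simps power2_eq_square)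
    then show "0 \<le> 2 * t * pi_inner \<pi> y W + t\<^sup>2 * R"
      using min[of "\<lambda>x. u\<^sub>0 x + t * y x"] attained by simp
  qed
  then have "W x = 0" for x
    using pi_inner_self_eq_0[OF pos] by blast
  then show ?thesis unfolding W_def by auto
qed

lemma is_eigenvalue_of_real:
  assumes "mat_app M u = (\<lambda>x. \<mu> * u x)" "u \<noteq> (\<lambda>_. 0)"
  shows "is_eigenvalue M (complex_of_real \<mu>)"
  unfolding is_eigenvalue_def
proof (intro exI conjI)
  show "(\<chi> x. complex_of_real (u x)) \<noteq> 0"
    using assms(2) by (auto simp: vec_eq_iff fun_eq_iff)
  show "cmat M *v (\<chi> x. complex_of_real (u x)) = complex_of_real \<mu> *s (\<chi> x. complex_of_real (u x))"
  proof (subst vec_eq_iff, intro allI)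
    fix x
    have "mat_app M u x = \<mu> * u x" using assms(1) by simp
    then show "(cmat M *v (\<chi> x. complex_of_real (u x))) $ x
             = (complex_of_real \<mu> *s (\<chi> x. complex_of_real (u x))) $ x"
      unfolding cmat_def matrix_vector_mult_def mat_app_def by (simp flip: of_real_mult of_real_sum)
  qed
qed

lemma eigenvalues_nonneg_imp_quadratic_form_nonneg:
  fixes M :: "real^'n^'n"
  assumes pos: "\<forall>x. \<pi> $ x > 0" and M: "reversible \<pi> M" "eigenvalues_nonneg M"
  shows "0 \<le> pi_inner \<pi> w (mat_app M w)"
proof -
  obtain u\<^sub>0 where u\<^sub>0: "u\<^sub>0 \<noteq> (\<lambda>_. 0)"
    and min: "\<And>u. u \<noteq> (\<lambda>_. 0) \<Longrightarrow> rayleigh_quotient \<pi> M u\<^sub>0 \<le> rayleigh_quotient \<pi> M u"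
    using rayleigh_quotient_attains_min[OF pos] by blast
  define \<mu> where "\<mu> = rayleigh_quotient \<pi> M u\<^sub>0"
  have bound: "\<mu> * pi_inner \<pi> z z \<le> pi_inner \<pi> z (mat_app M z)" for z
    using quadratic_form_ge_rayleigh_bound[OF pos min] unfolding \<mu>_def .
  from u\<^sub>0 obtain x where "u\<^sub>0 x \<noteq> 0" by auto
  then have "pi_inner \<pi> u\<^sub>0 (mat_app M u\<^sub>0) = \<mu> * pi_inner \<pi> u\<^sub>0 u\<^sub>0"
    using pi_inner_self_pos[OF pos] unfolding \<mu>_def rayleigh_quotient_def by fastforce
  then have "is_eigenvalue M (complex_of_real \<mu>)"
    using rayleigh_minimiser_is_eigenvector[OF pos M(1) _ bound] u\<^sub>0 by (intro is_eigenvalue_of_real)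
  then have "\<mu> \<ge> 0"
    using M(2) unfolding eigenvalues_nonneg_def by auto
  then show ?thesis
    using bound[of w] pi_inner_self_nonneg[OF pos, of w] by (meson mult_nonneg_nonneg order_trans)
qed

lemma pi_inner_mat_app_combination_mono:
  fixes Ps Ps' :: "nat \<Rightarrow> real^'n^'n"
  assumes pos: "\<forall>x. \<pi> $ x > 0"
    and "\<And>k. k < l \<Longrightarrow> reversible \<pi> (Ps k - Ps' k) \<and> eigenvalues_nonneg (Ps k - Ps' k)"
    and "\<And>k. k < l \<Longrightarrow> a k \<ge> 0"
  shows "pi_inner \<pi> w (mat_app (\<Sum>k<l. a k *\<^sub>R Ps' k) w) \<le> pi_inner \<pi> w (mat_app (\<Sum>k<l. a k *\<^sub>R Ps k) w)"
  unfolding pi_inner_mat_app_combination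
proof (rule sum_mono)
  fix k
  assume "k \<in> {..<l}"
  then have k: "k < l" by simp
  then have "0 \<le> pi_inner \<pi> w (mat_app (Ps k - Ps' k) w)"
    using assms(2) eigenvalues_nonneg_imp_quadratic_form_nonneg[OF pos] by blast
  then show "a k * pi_inner \<pi> w (mat_app (Ps' k) w) \<le> a k * pi_inner \<pi> w (mat_app (Ps k) w)"
    using assms(3)[OF k] unfolding pi_inner_mat_app_diff by (simp add: mult_left_mono)
qed

section \<open>Comparison of asymptotic variances\<close>

lemma asym_var_mono:
  assumes pd: "prob_dist \<pi>"
    and P: "reversible \<pi> P" "transition_matrix P" "irreducible_chain P"
    and P': "reversible \<pi> P'" "transition_matrix P'" "irreducible_chain P'"
    and dominated: "\<And>w. pi_inner \<pi> w (mat_app P' w) \<le> pi_inner \<pi> w (mat_app P w)"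
  shows "asym_var \<pi> f P' \<le> asym_var \<pi> f P"
proof -
  have pos: "\<forall>x. \<pi> $ x > 0" using pd unfolding prob_dist_def by simp
  define h where "h = (\<lambda>x. f x - pi_inner \<pi> (\<lambda>_. 1) f)"
  have "pi_inner \<pi> (\<lambda>_. 1) h = 0"
    unfolding h_def pi_inner_diff_right pi_inner_one_const[OF pd] by simp
  then obtain g g' where g: "\<And>x. h x = g x - mat_app P g x" and g': "\<And>x. h x = g' x - mat_app P' g' x"
    using poisson_equation_solvable[OF pd P] poisson_equation_solvable[OF pd P'] by metis
  have Pg: "mat_app P g = (\<lambda>x. g x - h x)" using g by auto
  have P'g': "mat_app P' g' = (\<lambda>x. g' x - h x)" using g' by auto
  define d where "d = (\<lambda>x. g' x - g x)"
  have adjoint: "pi_inner \<pi> g (mat_app P g') = pi_inner \<pi> g' g - pi_inner \<pi> g' h"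
    using pi_inner_mat_app_reversible[OF P(1), of g g']
    unfolding Pg pi_inner_diff_left pi_inner_commute[of \<pi> g g'] pi_inner_commute[of \<pi> h g'] .
  have "0 \<le> pi_inner \<pi> d d - pi_inner \<pi> d (mat_app P d)"
    using dirichlet_form_nonneg[OF P(1,2) pos] by simp
  also have "\<dots> = (pi_inner \<pi> g' g' - pi_inner \<pi> g' (mat_app P g')) - 2 * pi_inner \<pi> g' h + pi_inner \<pi> g h"
    unfolding d_def mat_app_diff pi_inner_diff_left pi_inner_diff_right Pg adjoint
      pi_inner_commute[of \<pi> g g']
    by simp
  also have "\<dots> \<le> (pi_inner \<pi> g' g' - pi_inner \<pi> g' (mat_app P' g')) - 2 * pi_inner \<pi> g' h + pi_inner \<pi> g h"
    using dominated[of g'] by simp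
  also have "pi_inner \<pi> g' g' - pi_inner \<pi> g' (mat_app P' g') = pi_inner \<pi> g' h"
    unfolding P'g' pi_inner_diff_right by simp
  finally have "pi_inner \<pi> g' h \<le> pi_inner \<pi> g h" by simp
  then show ?thesis
    unfolding asym_var_eq_poisson[OF pd P(1,2) h_def g] asym_var_eq_poisson[OF pd P'(1,2) h_def g'] by simp
qed

theorem theorem5:
  fixes \<pi> :: "real^'n"
    and Ps Ps' :: "nat \<Rightarrow> real^'n^'n"
    and a :: "nat \<Rightarrow> real"
    and l :: nat
  assumes "prob_dist \<pi>"
    and "\<And>k. k < l \<Longrightarrow> transition_matrix (Ps k) \<and> reversible \<pi> (Ps k)"
    and "\<And>k. k < l \<Longrightarrow> transition_matrix (Ps' k) \<and> reversible \<pi> (Ps' k)"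
    and "\<And>k. k < l \<Longrightarrow> a k > 0"
    and "(\<Sum>k<l. a k) = 1"
    and "irreducible_chain (\<Sum>k<l. a k *\<^sub>R Ps k)"
    and "irreducible_chain (\<Sum>k<l. a k *\<^sub>R Ps' k)"
    and "\<And>k. k < l \<Longrightarrow> eigenvalues_nonneg (Ps k - Ps' k)"
  shows "efficiency_dominates \<pi> (\<Sum>k<l. a k *\<^sub>R Ps' k) (\<Sum>k<l. a k *\<^sub>R Ps k)"
proof -
  have pos: "\<forall>x. \<pi> $ x > 0" using assms(1) unfolding prob_dist_def by simp
  have "reversible \<pi> (Ps k - Ps' k) \<and> eigenvalues_nonneg (Ps k - Ps' k)" if "k < l" for k
    using assms(2,3,8)[OF that] by (simp add: reversible_diff)
  then have dominated: "pi_inner \<pi> w (mat_app (\<Sum>k<l. a k *\<^sub>R Ps' k) w)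
                      \<le> pi_inner \<pi> w (mat_app (\<Sum>k<l. a k *\<^sub>R Ps k) w)" for w
    using assms(4) by (intro pi_inner_mat_app_combination_mono[OF pos]) (auto simp: less_imp_le)
  have "reversible \<pi> (\<Sum>k<l. a k *\<^sub>R Ps k)" "reversible \<pi> (\<Sum>k<l. a k *\<^sub>R Ps' k)"
    using assms(2,3) by (auto intro!: reversible_combination)
  moreover have "transition_matrix (\<Sum>k<l. a k *\<^sub>R Ps k)" "transition_matrix (\<Sum>k<l. a k *\<^sub>R Ps' k)"
    using assms(2-5) by (auto intro!: transition_matrix_convex_combination less_imp_le)
  ultimately show ?thesis
    unfolding efficiency_dominates_def
    using asym_var_mono[OF assms(1) _ _ assms(6) _ _ assms(7) dominated] by blast
qed

end
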